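(* Every finite projective plane (of any order $n\ge 2$) admits a legitimate coloring with $42$ colors.
   Context: For a coloring $f:P\to\{1,\dots,\mathsf d\}$ of the points of a projective plane $P_n=(P,L)$, the type of a line $\ell$ is $(|\ell\cap f^{-1}(1)|,\dots,|\ell\cap f^{-1}(\mathsf d)|)$. The coloring is legitimate if all lines have pairwise distinct types. *)

theory Defs
  imports Main
begin

definition projective_plane :: "'a set \<Rightarrow> 'a set set \<Rightarrow> bool" where
  "projective_plane P L \<longleftrightarrow>
     (\<forall>l\<in>L. l \<subseteq> P) \<and>
     (\<forall>p\<in>P. \<forall>q\<in>P. p \<noteq> q \<longrightarrow> (\<exists>!l. l \<in> L \<and> p \<in> l \<and> q \<in> l)) \<and>
     (\<forall>l\<in>L. \<forall>m\<in>L. l \<noteq> m \<longrightarrow> (\<exists>!p. p \<in> P \<and> p \<in> l \<and> p \<in> m)) \<and>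
     (\<exists>Q. Q \<subseteq> P \<and> card Q = 4 \<and>
        (\<forall>l\<in>L. card (Q \<inter> l) \<le> 2))"

definition pp_order :: "'a set set \<Rightarrow> nat" where
  "pp_order L = card (SOME l. l \<in> L) - 1"

definition line_type :: "nat \<Rightarrow> ('a \<Rightarrow> nat) \<Rightarrow> 'a set \<Rightarrow> nat list" where
  "line_type d f l = map (\<lambda>i. card (l \<inter> f -` {i})) [1..<d+1]"

definition legitimate_coloring :: "'a set \<Rightarrow> 'a set set \<Rightarrow> nat \<Rightarrow> ('a \<Rightarrow> nat) \<Rightarrow> bool" where
  "legitimate_coloring P L d f \<longleftrightarrow>
     (\<forall>p\<in>P. f p \<in> {1..d}) \<and> inj_on (line_type d f) L"

end

theory Submission
  imports Defs "HOL-Library.FuncSet"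
begin

text \<open>Fix a point \<open>Z\<close> and split the \<open>n + 1\<close> lines through \<open>Z\<close> into a set \<open>A\<close> of
  \<open>(n + 1) div 2\<close> lines and the remaining set \<open>B\<close>. The point \<open>Z\<close> gets colour 33; every other point
  lies on exactly one line through \<open>Z\<close> and gets a colour in 1..16 if that line is in \<open>A\<close> and in
  17..32 otherwise, the offset within the block recording its membership in four subsets
  \<open>S\<^sub>0, ..., S\<^sub>3\<close> of \<open>P - {Z}\<close>.

  If two lines have the same type, then both contain \<open>Z\<close> or both miss it, and every \<open>S\<^sub>j\<close> is
  balanced on them: it meets the two lines minus their common point in equally many points of each
  block. A uniformly random subset is balanced on two disjoint \<open>k\<close>-sets with probability
  \<open>binom(2k, k) / 4\<^sup>k \<le> 1 / sqrt(3k + 1)\<close>. So all four subsets are balanced on a given pair of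
  lines through \<open>Z\<close> with probability at most \<open>1 / (3 (n + 1)\<^sup>2)\<close>, and on a pair of lines missing
  \<open>Z\<close>, whose blocks have sizes differing by at most 2, with probability at most \<open>1 / (2 n\<^sup>4)\<close>.
  There are at most \<open>(n + 1)\<^sup>2\<close> respectively \<open>n\<^sup>4\<close> such ordered pairs, so the bad events have total
  probability at most \<open>1/3 + 1/2 < 1\<close>.\<close>

definition balanced_subsets :: "'a set \<Rightarrow> 'a set \<Rightarrow> 'a set \<Rightarrow> 'a set \<Rightarrow> 'a set \<Rightarrow> 'a set set" where
  "balanced_subsets X U V U' V' =
     {S. S \<subseteq> X \<and> card (S \<inter> U) = card (S \<inter> V) \<and> card (S \<inter> U') = card (S \<inter> V')}"

lemma card_swap_balanced:
  assumes "finite U" "finite V" "U \<inter> V = {}" "card (S \<inter> U) = card (S \<inter> V)"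
  shows "card (S \<inter> V \<union> (U - S)) = card U"
proof -
  have "card (S \<inter> V \<union> (U - S)) = card (S \<inter> V) + card (U - S)"
    using assms by (intro card_Un_disjoint) auto
  moreover have "card (U - S) = card U - card (S \<inter> U)"
    using assms by (simp add: card_Diff_subset_Int Int_commute)
  moreover have "card (S \<inter> U) \<le> card U"
    using assms by (intro card_mono) auto
  ultimately show ?thesis
    using assms by simp
qed

text \<open>Replacing the part of \<open>S\<close> in \<open>U\<close> by its complement turns a subset balanced on \<open>U, V\<close>
  into a \<open>card U\<close>-subset of \<open>U \<union> V\<close>, injectively; this gives the binomial factors.\<close>
lemma card_balanced_subsets_le:
  assumes X: "finite X" "U \<union> V \<union> U' \<union> V' \<subseteq> X"
    and disj: "U \<inter> V = {}" "U' \<inter> V' = {}" "(U \<union> V) \<inter> (U' \<union> V') = {}"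
    and card: "card U = k" "card V = k" "card U' = k'" "card V' = k'"
  shows "card (balanced_subsets X U V U' V') \<le>
           ((2*k) choose k) * ((2*k') choose k') * 2 ^ (card X - (2*k + 2*k'))"
proof -
  define W where "W = U \<union> V \<union> U' \<union> V'"
  define swap where "swap S = (S \<inter> V \<union> (U - S), S \<inter> V' \<union> (U' - S), S - W)" for S
  define C where "C = {B. B \<subseteq> U \<union> V \<and> card B = k} \<times> {B. B \<subseteq> U' \<union> V' \<and> card B = k'} \<times> Pow (X - W)"
  have fin: "finite U" "finite V" "finite U'" "finite V'"
    using X by (auto intro: finite_subset)
  have "inj_on swap (balanced_subsets X U V U' V')"
  proof (rule inj_onI)
    fix S T assume "swap S = swap T"
    then have "S \<inter> (U \<union> V) = T \<inter> (U \<union> V)" "S \<inter> (U' \<union> V') = T \<inter> (U' \<union> V')" "S - W = T - W"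
      using disj unfolding swap_def by blast+
    then show "S = T"
      unfolding W_def by blast
  qed
  moreover have "swap ` balanced_subsets X U V U' V' \<subseteq> C"
    using card_swap_balanced[of U V] card_swap_balanced[of U' V'] fin disj card
    unfolding swap_def C_def balanced_subsets_def by auto
  moreover have "finite C"
    unfolding C_def using fin X by auto
  ultimately have "card (balanced_subsets X U V U' V') \<le> card C"
    by (meson card_inj_on_le)
  moreover have "card (U \<union> V) = 2*k" "card (U' \<union> V') = 2*k'"
    using fin disj card by (simp_all add: card_Un_disjoint)
  moreover have "card W = card (U \<union> V) + card (U' \<union> V')"
    unfolding W_def using fin disj card_Un_disjoint[of "U \<union> V" "U' \<union> V'"] by (simp add: Un_assoc)
  moreover have "card (X - W) = card X - card W"
    using X fin unfolding W_def by (intro card_Diff_subset) auto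
  ultimately show ?thesis
    unfolding C_def using X fin by (simp add: card_cartesian_product n_subsets card_Pow)
qed

lemma central_binomial_Suc:
  "Suc k * ((2 * Suc k) choose Suc k) = 2 * (2*k + 1) * ((2*k) choose k)"
proof -
  have "Suc (2*k) * ((2*k) choose k) = (Suc (2*k) choose Suc k) * Suc k"
    by (rule Suc_times_binomial_eq)
  moreover have "(Suc (2*k) choose k) = (Suc (2*k) choose Suc k)"
    using binomial_symmetric[of k "Suc (2*k)"] by (simp add: Suc_diff_le)
  then have "(2 * Suc k) choose Suc k = 2 * (Suc (2*k) choose Suc k)"
    by simp
  ultimately show ?thesis
    by (simp add: algebra_simps)
qed

lemma central_binomial_sq_le: "((2*k) choose k)^2 * (3*k + 1) \<le> 16^k"
proof (induction k)
  case 0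
  show ?case by simp
next
  case (Suc k)
  let ?c = "(2*k) choose k" and ?c' = "(2 * Suc k) choose Suc k"
  have "(Suc k)^2 * (?c'^2 * (3 * Suc k + 1)) = (Suc k * ?c')^2 * (3 * Suc k + 1)"
    by (simp only: power_mult_distrib mult.assoc)
  also have "\<dots> = ?c^2 * (4 * (2*k + 1)^2 * (3*k + 4))"
    by (simp only: central_binomial_Suc) (simp add: power2_eq_square algebra_simps)
  also have "\<dots> \<le> ?c^2 * (16 * (Suc k)^2 * (3*k + 1))"
    by (rule mult_left_mono) (simp_all add: power2_eq_square algebra_simps)
  also have "\<dots> = (Suc k)^2 * (16 * (?c^2 * (3*k + 1)))"
    by (simp add: algebra_simps)
  also have "\<dots> \<le> (Suc k)^2 * 16^Suc k"
    using Suc.IH by simp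
  finally show ?case
    by simp
qed

lemma balanced_count_pow4_le:
  assumes "2*k + 2*k' \<le> x"
  shows "(((2*k) choose k) * ((2*k') choose k') * 2 ^ (x - (2*k + 2*k')))^4 * ((3*k + 1) * (3*k' + 1))^2
           \<le> ((2::nat) ^ x)^4"
proof -
  define c where "c = ((2*k) choose k) * ((2*k') choose k')"
  define q where "q = (3*k + 1) * (3*k' + 1)"
  define e where "e = (2::nat) ^ (x - (2*k + 2*k'))"
  have "c^2 * q \<le> 16^k * 16^k'"
    using mult_mono[OF central_binomial_sq_le[of k] central_binomial_sq_le[of k']]
    unfolding c_def q_def by (simp add: algebra_simps)
  also have "\<dots> = (4 ^ (k + k'))^2"
    using power_mult[of "4::nat" 2 "k + k'"] power_mult[of "4::nat" "k + k'" 2]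
    by (simp add: power_add mult.commute)
  finally have cq: "c^2 * q \<le> (4 ^ (k + k'))^2" .
  have "(4::nat) ^ (k + k') = 2 ^ (2*k + 2*k')"
    using power_mult[of "2::nat" 2 "k + k'"] by (simp add: distrib_left)
  then have "(2::nat) ^ x = 4 ^ (k + k') * e"
    unfolding e_def using assms by (simp flip: power_add)
  then have "(c * e)^4 * q^2 = (c^2 * q)^2 * e^4" "((2::nat) ^ x)^4 = ((4 ^ (k + k'))^2)^2 * e^4"
    by (simp_all add: power_mult_distrib flip: power_mult)
  moreover have "(c^2 * q)^2 \<le> ((4 ^ (k + k'))^2)^2"
    using cq by (rule power_mono) simp
  ultimately show ?thesis
    unfolding c_def q_def e_def by (simp add: mult_right_mono)
qed

lemma close_split_pow4_le:
  fixes k k' :: nat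
  assumes "k \<le> k' + 2" "k' \<le> k + 2"
  shows "2 * (k + k')^4 \<le> ((3*k + 1) * (3*k' + 1))^2"
proof -
  have ordered: "3 * (a + (a + d))^2 \<le> 2 * ((3*a + 1) * (3*(a + d) + 1))" if d: "d \<le> 2" for a d :: nat
  proof -
    consider "d = 0" | "d = 1" | "d = 2" using d by linarith
    then show ?thesis by cases (simp_all add: power2_eq_square algebra_simps)
  qed
  have "3 * (k + k')^2 \<le> 2 * ((3*k + 1) * (3*k' + 1))"
  proof (cases "k \<le> k'")
    case True
    then show ?thesis using ordered[of "k' - k" k] assms by simp
  next
    case False
    then show ?thesis using ordered[of "k - k'" k'] assms by (simp add: ac_simps)
  qed
  then have "(3 * (k + k')^2)^2 \<le> (2 * ((3*k + 1) * (3*k' + 1)))^2"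
    by (rule power_mono) simp
  then have "9 * (k + k')^4 \<le> 4 * ((3*k + 1) * (3*k' + 1))^2"
    by (simp only: power_mult_distrib flip: power_mult) simp
  then show ?thesis
    by linarith
qed

lemma card_balanced_subsets_pow4_le:
  assumes X: "finite X" "U \<union> V \<union> U' \<union> V' \<subseteq> X"
    and disj: "U \<inter> V = {}" "U' \<inter> V' = {}" "(U \<union> V) \<inter> (U' \<union> V') = {}"
    and card: "card U = k" "card V = k" "card U' = k'" "card V' = k'"
  shows "card (balanced_subsets X U V U' V')^4 * ((3*k + 1) * (3*k' + 1))^2 \<le> (2 ^ card X)^4"
proof -
  have fin: "finite U" "finite V" "finite U'" "finite V'"
    using X by (auto intro: finite_subset)
  have "2*k + 2*k' = card (U \<union> V \<union> U' \<union> V')"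
    using fin disj card card_Un_disjoint[of "U \<union> V" "U' \<union> V'"] by (simp add: card_Un_disjoint Un_assoc)
  also have "\<dots> \<le> card X"
    using X by (rule card_mono)
  finally have "2*k + 2*k' \<le> card X" .
  moreover have "card (balanced_subsets X U V U' V')^4
      \<le> (((2*k) choose k) * ((2*k') choose k') * 2 ^ (card X - (2*k + 2*k')))^4"
    using card_balanced_subsets_le[OF assms] by (rule power_mono) simp
  ultimately show ?thesis
    using balanced_count_pow4_le by (meson le_trans mult_le_mono1)
qed

lemma card_UN_mult_le:
  assumes "finite I" "\<And>i. i \<in> I \<Longrightarrow> card (F i) * K \<le> T" "card I \<le> N"
  shows "card (\<Union>i\<in>I. F i) * K \<le> N * T"
proof -
  have "card (\<Union>i\<in>I. F i) * K \<le> (\<Sum>i\<in>I. card (F i)) * K"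
    using card_UN_le[OF assms(1)] by (rule mult_right_mono) simp
  also have "\<dots> = (\<Sum>i\<in>I. card (F i) * K)"
    by (simp add: sum_distrib_right)
  also have "\<dots> \<le> card I * T"
    using sum_mono[of I "\<lambda>i. card (F i) * K" "\<lambda>_. T"] assms(2) by simp
  also have "\<dots> \<le> N * T"
    using assms(3) by simp
  finally show ?thesis .
qed

locale finite_projective_plane =
  fixes P :: "'a set" and L :: "'a set set"
  assumes finite_points: "finite P" and projective: "projective_plane P L"
begin

lemma plane_axioms:
  "\<forall>l\<in>L. l \<subseteq> P"
  "\<forall>p\<in>P. \<forall>q\<in>P. p \<noteq> q \<longrightarrow> (\<exists>!l. l \<in> L \<and> p \<in> l \<and> q \<in> l)"
  "\<forall>l\<in>L. \<forall>m\<in>L. l \<noteq> m \<longrightarrow> (\<exists>!p. p \<in> P \<and> p \<in> l \<and> p \<in> m)"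
  "\<exists>Q. Q \<subseteq> P \<and> card Q = 4 \<and> (\<forall>l\<in>L. card (Q \<inter> l) \<le> 2)"
  using projective unfolding projective_plane_def by simp_all

lemma line_subset: "l \<in> L \<Longrightarrow> l \<subseteq> P"
  using plane_axioms(1) by blast

lemma join_ex1: "p \<in> P \<Longrightarrow> q \<in> P \<Longrightarrow> p \<noteq> q \<Longrightarrow> \<exists>!l. l \<in> L \<and> p \<in> l \<and> q \<in> l"
  using plane_axioms(2) by simp

lemma join_exists: "p \<in> P \<Longrightarrow> q \<in> P \<Longrightarrow> p \<noteq> q \<Longrightarrow> \<exists>l\<in>L. p \<in> l \<and> q \<in> l"
  using join_ex1 by (meson ex1_implies_ex)

lemma join_unique:
  assumes "l \<in> L" "m \<in> L" "p \<in> l" "q \<in> l" "p \<in> m" "q \<in> m" "p \<noteq> q"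
  shows "l = m"
  using join_ex1[of p q] line_subset assms by auto

lemma meet_exists: "l \<in> L \<Longrightarrow> m \<in> L \<Longrightarrow> l \<noteq> m \<Longrightarrow> \<exists>p. p \<in> l \<and> p \<in> m"
  using plane_axioms(3) by (meson ex1_implies_ex)

lemma finite_line: "l \<in> L \<Longrightarrow> finite l"
  using line_subset finite_points finite_subset by blast

lemma finite_lines: "finite L"
  using line_subset finite_points by (meson Pow_iff finite_Pow_iff finite_subset subsetI)

lemma quadrangle:
  obtains Q where "Q \<subseteq> P" "card Q = 4" "\<forall>l\<in>L. card (Q \<inter> l) \<le> 2"
  using plane_axioms(4) by blast

definition meet :: "'a set \<Rightarrow> 'a set \<Rightarrow> 'a" where
  "meet l m = (SOME p. p \<in> l \<and> p \<in> m)"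

lemma meet_in: "l \<in> L \<Longrightarrow> m \<in> L \<Longrightarrow> l \<noteq> m \<Longrightarrow> meet l m \<in> l \<and> meet l m \<in> m"
  unfolding meet_def using meet_exists by (rule someI_ex)

definition pencil :: "'a \<Rightarrow> 'a set set" where
  "pencil Z = {l \<in> L. Z \<in> l}"

lemma pencil_unique: "l \<in> pencil Z \<Longrightarrow> m \<in> pencil Z \<Longrightarrow> x \<in> l \<Longrightarrow> x \<in> m \<Longrightarrow> x \<noteq> Z \<Longrightarrow> l = m"
  unfolding pencil_def using join_unique by blast

lemma finite_pencil: "finite (pencil Z)"
  unfolding pencil_def using finite_lines by simp

text \<open>Joining with \<open>Z\<close> is a bijection from a line avoiding \<open>Z\<close> onto the pencil of \<open>Z\<close>.\<close>
lemma card_line_eq_card_pencil: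
  assumes Z: "Z \<in> P" and l: "l \<in> L" "Z \<notin> l"
  shows "card l = card (pencil Z)"
proof -
  define join where "join x = (SOME k. k \<in> L \<and> Z \<in> k \<and> x \<in> k)" for x
  have join: "join x \<in> pencil Z \<and> x \<in> join x" if "x \<in> l" for x
  proof -
    have "x \<in> P" "x \<noteq> Z" using that l line_subset by auto
    then have "\<exists>k. k \<in> L \<and> Z \<in> k \<and> x \<in> k" using join_exists Z by blast
    then have "join x \<in> L \<and> Z \<in> join x \<and> x \<in> join x" unfolding join_def by (rule someI_ex)
    then show ?thesis unfolding pencil_def by simp
  qed
  have "bij_betw join l (pencil Z)"
  proof (rule bij_betwI')
    fix x y assume x: "x \<in> l" and y: "y \<in> l"
    show "(join x = join y) = (x = y)"
    proof
      assume "join x = join y"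
      moreover have "join x \<noteq> l" using join[OF x] l unfolding pencil_def by auto
      ultimately show "x = y" using join x y l join_unique[of l "join x" x y] unfolding pencil_def by auto
    qed simp
  next
    fix x assume "x \<in> l"
    then show "join x \<in> pencil Z" using join by blast
  next
    fix k assume k: "k \<in> pencil Z"
    then have "k \<in> L" "k \<noteq> l" using l unfolding pencil_def by auto
    then obtain x where x: "x \<in> k" "x \<in> l" using meet_exists l by blast
    then have "join x = k" using pencil_unique[OF _ k] join l by blast
    then show "\<exists>x\<in>l. k = join x" using x by auto
  qed
  then show ?thesis by (rule bij_betw_same_card)
qed

lemma quadrangle_avoiding_line:
  assumes Q: "Q \<subseteq> P" "card Q = 4" "\<forall>l\<in>L. card (Q \<inter> l) \<le> 2" and q: "q \<in> Q" "q' \<in> Q"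
  obtains l where "l \<in> L" "q \<notin> l" "q' \<notin> l"
proof -
  have "finite Q" using Q(1) finite_points finite_subset by blast
  moreover have "card {q, q'} \<le> 2" by (simp add: card_insert_if)
  ultimately have "card (Q - {q, q'}) \<ge> 2" using Q(2) q by (simp add: card_Diff_subset)
  then obtain T where "T \<subseteq> Q - {q, q'}" "card T = 2" by (meson obtain_subset_with_card_n)
  moreover obtain r s where "T = {r, s}" "r \<noteq> s" using \<open>card T = 2\<close> by (meson card_2_iff)
  ultimately have rs: "r \<in> Q - {q, q'}" "s \<in> Q - {q, q'}" "r \<noteq> s" by auto
  then obtain l where l: "l \<in> L" "r \<in> l" "s \<in> l" using join_exists Q(1) by blast
  have "x \<notin> l" if x: "x \<in> {q, q'}" for x
  proof
    assume "x \<in> l"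
    then have "{x, r, s} \<subseteq> Q \<inter> l" using x q rs l by blast
    then have "card {x, r, s} \<le> card (Q \<inter> l)" using \<open>finite Q\<close> by (intro card_mono) auto
    moreover have "card {x, r, s} = 3" using rs x by auto
    moreover have "card (Q \<inter> l) \<le> 2" using Q(3) l(1) by blast
    ultimately show False by linarith
  qed
  then show ?thesis using that l(1) by blast
qed

lemma card_lines_eq:
  assumes "l \<in> L" "m \<in> L"
  shows "card l = card m"
proof -
  obtain Q where Q: "Q \<subseteq> P" "card Q = 4" "\<forall>l\<in>L. card (Q \<inter> l) \<le> 2" by (rule quadrangle)
  have "\<exists>q\<in>Q. q \<notin> k" if "k \<in> L" for k
  proof (rule ccontr)
    assume "\<not> ?thesis"
    then have "Q \<inter> k = Q" by blast
    moreover have "card (Q \<inter> k) \<le> 2" using Q(3) that by blast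
    ultimately show False using Q(2) by simp
  qed
  then obtain q q' where q: "q \<in> Q" "q \<notin> l" "q' \<in> Q" "q' \<notin> m" using assms by blast
  obtain k where k: "k \<in> L" "q \<notin> k" "q' \<notin> k" using quadrangle_avoiding_line[OF Q q(1,3)] .
  have "q \<in> P" "q' \<in> P" using Q(1) q by auto
  then have "card l = card (pencil q)" "card k = card (pencil q)"
    "card k = card (pencil q')" "card m = card (pencil q')"
    using card_line_eq_card_pencil[OF \<open>q \<in> P\<close> assms(1) q(2)]
      card_line_eq_card_pencil[OF \<open>q \<in> P\<close> k(1,2)] card_line_eq_card_pencil[OF \<open>q' \<in> P\<close> k(1,3)]
      card_line_eq_card_pencil[OF \<open>q' \<in> P\<close> assms(2) q(4)] by simp_all
  then show ?thesis by simp
qed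

lemma card_line_pp_order:
  assumes "pp_order L \<ge> 1" "l \<in> L"
  shows "card l = pp_order L + 1"
proof -
  have "(SOME l. l \<in> L) \<in> L" using assms(2) by (rule someI)
  then have "pp_order L = card l - 1" unfolding pp_order_def using card_lines_eq[OF _ assms(2)] by metis
  then show ?thesis using assms(1) by simp
qed

lemma ex_point_off_line: obtains Z l where "Z \<in> P" "l \<in> L" "Z \<notin> l"
proof -
  obtain Q where Q: "Q \<subseteq> P" "card Q = 4" "\<forall>l\<in>L. card (Q \<inter> l) \<le> 2" by (rule quadrangle)
  then obtain Z where "Z \<in> Q" by (metis card.empty ex_in_conv zero_neq_numeral)
  with quadrangle_avoiding_line[OF Q] Q(1) that show ?thesis by blast
qed

definition covered :: "'a \<Rightarrow> 'a set set \<Rightarrow> 'a set" where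
  "covered Z G = {x \<in> P. x \<noteq> Z \<and> (\<exists>l\<in>G. x \<in> l)}"

lemma covered_Diff:
  assumes "Z \<in> P" "G \<subseteq> pencil Z"
  shows "covered Z (pencil Z - G) = P - {Z} - covered Z G"
proof (intro equalityI subsetI)
  fix x assume "x \<in> covered Z (pencil Z - G)"
  then obtain l where "x \<in> P" "x \<noteq> Z" "l \<in> pencil Z" "l \<notin> G" "x \<in> l" unfolding covered_def by blast
  then show "x \<in> P - {Z} - covered Z G" using pencil_unique assms(2) unfolding covered_def by blast
next
  fix x assume x: "x \<in> P - {Z} - covered Z G"
  then obtain l where "l \<in> L" "Z \<in> l" "x \<in> l" using join_exists assms(1) by blast
  then show "x \<in> covered Z (pencil Z - G)" using x unfolding covered_def pencil_def by blast
qed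

lemma pencil_Int_covered:
  assumes l: "l \<in> pencil Z" and G: "G \<subseteq> pencil Z"
  shows "l \<inter> covered Z G = (if l \<in> G then l - {Z} else {})"
proof (cases "l \<in> G")
  case True
  have "l \<subseteq> P" using l line_subset unfolding pencil_def by auto
  then show ?thesis using True unfolding covered_def by auto
next
  case False
  then have "l \<inter> covered Z G = {}" using pencil_unique[OF l] G unfolding covered_def by blast
  then show ?thesis using False by simp
qed

text \<open>A line avoiding \<open>Z\<close> meets every line through \<open>Z\<close> exactly once.\<close>
lemma card_line_Int_covered:
  assumes m: "m \<in> L" "Z \<notin> m" and G: "G \<subseteq> pencil Z"
  shows "card (m \<inter> covered Z G) = card G"
proof -
  define cut where "cut l = meet l m" for l
  have cut: "cut l \<in> l \<and> cut l \<in> m \<and> cut l \<noteq> Z" if "l \<in> G" for l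
    using meet_in[of l m] that G m unfolding cut_def pencil_def by blast
  have "bij_betw cut G (m \<inter> covered Z G)"
  proof (rule bij_betwI')
    fix l l' assume l: "l \<in> G" and l': "l' \<in> G"
    show "(cut l = cut l') = (l = l')"
    proof
      assume "cut l = cut l'"
      then show "l = l'" using pencil_unique[of l Z l' "cut l"] cut[OF l] cut[OF l'] l l' G by auto
    qed simp
  next
    fix l assume "l \<in> G"
    then show "cut l \<in> m \<inter> covered Z G"
      using cut m line_subset unfolding covered_def by blast
  next
    fix x assume x: "x \<in> m \<inter> covered Z G"
    then obtain l where l: "l \<in> G" "x \<in> l" unfolding covered_def by blast
    then have "l \<in> L" "l \<noteq> m" using G m unfolding pencil_def by auto
    then have "cut l = x" using join_unique[of l m "cut l" x] cut l x m by blast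
    then show "\<exists>l\<in>G. x = cut l" using l by auto
  qed
  then show ?thesis by (simp add: bij_betw_same_card)
qed

text \<open>A line avoiding \<open>Z\<close> is determined by its intersections with two lines through \<open>Z\<close>.\<close>
lemma card_lines_avoiding_le:
  assumes lines: "\<forall>l\<in>L. card l = n + 1" and pencil: "card (pencil Z) \<ge> 2"
  shows "card {m \<in> L. Z \<notin> m} \<le> n^2"
proof -
  obtain T where T: "T \<subseteq> pencil Z" "card T = 2" using pencil by (meson obtain_subset_with_card_n)
  then obtain c c' where "T = {c, c'}" "c \<noteq> c'" by (meson card_2_iff)
  then have c: "c \<in> pencil Z" "c' \<in> pencil Z" "c \<noteq> c'" using T by auto
  define cuts where "cuts m = (meet m c, meet m c')" for m
  have cut: "meet m k \<in> m \<and> meet m k \<in> k - {Z}" if "m \<in> L" "Z \<notin> m" "k \<in> pencil Z" for m k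
    using meet_in[of m k] that unfolding pencil_def by auto
  have "inj_on cuts {m \<in> L. Z \<notin> m}"
  proof (rule inj_onI)
    fix m m' assume m: "m \<in> {m \<in> L. Z \<notin> m}" and m': "m' \<in> {m \<in> L. Z \<notin> m}" and "cuts m = cuts m'"
    then have eq: "meet m c = meet m' c" "meet m c' = meet m' c'" unfolding cuts_def by auto
    have "meet m c \<noteq> meet m c'"
    proof
      assume same: "meet m c = meet m c'"
      have "meet m c \<in> c - {Z}" "meet m c' \<in> c' - {Z}" using cut[of m c] cut[of m c'] m c by simp_all
      then have "meet m c \<in> c" "meet m c \<in> c'" "meet m c \<noteq> Z" using same by simp_all
      then show False using pencil_unique[OF c(1,2)] c(3) by blast
    qed
    moreover have "meet m c \<in> m" "meet m c' \<in> m"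
      using cut[of m c] cut[of m c'] m c by simp_all
    moreover have "meet m c \<in> m'" "meet m c' \<in> m'"
      using cut[of m' c] cut[of m' c'] m' c eq by simp_all
    ultimately show "m = m'" using join_unique[of m m'] m m' by blast
  qed
  moreover have "cuts ` {m \<in> L. Z \<notin> m} \<subseteq> (c - {Z}) \<times> (c' - {Z})"
    using cut c unfolding cuts_def by auto
  moreover have "finite ((c - {Z}) \<times> (c' - {Z}))"
    using c finite_line unfolding pencil_def by auto
  ultimately have "card {m \<in> L. Z \<notin> m} \<le> card ((c - {Z}) \<times> (c' - {Z}))"
    by (rule card_inj_on_le)
  also have "\<dots> = n^2"
    using c lines finite_line unfolding pencil_def by (simp add: card_cartesian_product power2_eq_square)
  finally show ?thesis .
qed

end

lemma card_Int_vimage_eq_sum: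
  assumes "finite l" "finite C"
  shows "card (l \<inter> f -` C) = (\<Sum>i\<in>C. card (l \<inter> f -` {i}))"
proof -
  have "l \<inter> f -` C = (\<Union>i\<in>C. l \<inter> f -` {i})" by auto
  also have "card \<dots> = (\<Sum>i\<in>C. card (l \<inter> f -` {i}))"
    by (rule card_UN_disjoint) (use assms in auto)
  finally show ?thesis .
qed

lemma line_type_eq_imp_card_eq:
  assumes "finite l" "finite m" "line_type d f l = line_type d f m" "C \<subseteq> {1..d}"
  shows "card (l \<inter> f -` C) = card (m \<inter> f -` C)"
proof -
  have "card (l \<inter> f -` {i}) = card (m \<inter> f -` {i})" if i: "i \<in> {1..d}" for i
  proof -
    have "line_type d f l ! (i - 1) = line_type d f m ! (i - 1)"
      using assms(3) by simp
    moreover have "[1..<d+1] ! (i - 1) = i" "i - 1 < length [1..<d+1]"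
      using i by (auto simp: nth_upt simp del: upt_Suc)
    ultimately show ?thesis
      unfolding line_type_def by (simp del: upt_Suc)
  qed
  moreover have "finite C"
    using assms(4) finite_subset by blast
  ultimately show ?thesis
    using assms card_Int_vimage_eq_sum[of l C f] card_Int_vimage_eq_sum[of m C f]
    by (metis (no_types, lifting) subsetD sum.cong)
qed

definition subset_code :: "(nat \<Rightarrow> 'a set) \<Rightarrow> 'a \<Rightarrow> nat" where
  "subset_code S x = (if x \<in> S 0 then 1 else 0) + (if x \<in> S 1 then 2 else 0)
     + (if x \<in> S 2 then 4 else 0) + (if x \<in> S 3 then 8 else 0)"

lemma subset_code_less: "subset_code S x < 16"
  unfolding subset_code_def by simp

lemma odd_subset_code_div_iff: "j < 4 \<Longrightarrow> odd (subset_code S x div 2^j) \<longleftrightarrow> x \<in> S j"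
proof -
  assume "j < 4"
  then consider "j = 0" | "j = 1" | "j = 2" | "j = 3" by linarith
  then show ?thesis unfolding subset_code_def
    by cases (cases "x \<in> S 0"; cases "x \<in> S 1"; cases "x \<in> S 2"; cases "x \<in> S 3"; simp)+
qed

definition bit_colours :: "nat \<Rightarrow> nat \<Rightarrow> nat set" where
  "bit_colours b j = {c. b \<le> c \<and> c < b + 16 \<and> odd ((c - b) div 2^j)}"

lemma bit_colours_subset: "bit_colours b j \<subseteq> {b..<b + 16}"
  unfolding bit_colours_def by auto

lemma add_subset_code_in_bit_colours_iff:
  "j < 4 \<Longrightarrow> b + subset_code S x \<in> bit_colours b j \<longleftrightarrow> x \<in> S j"
  unfolding bit_colours_def using subset_code_less[of S x] odd_subset_code_div_iff[of j S x] by auto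

locale pencil_colouring = finite_projective_plane +
  fixes Z :: 'a and A :: "'a set set" and n :: nat
  assumes centre: "Z \<in> P" and card_line: "\<And>l. l \<in> L \<Longrightarrow> card l = n + 1"
    and card_pencil: "card (pencil Z) = n + 1" and order_pos: "0 < n"
    and A_subset: "A \<subseteq> pencil Z" and card_A: "card A = (n + 1) div 2"
begin

abbreviation B :: "'a set set" where "B \<equiv> pencil Z - A"

definition colour_blocks :: "(nat \<times> 'a set set) set" where
  "colour_blocks = {(1, A), (17, B)}"

definition colouring :: "(nat \<Rightarrow> 'a set) \<Rightarrow> 'a \<Rightarrow> nat" where
  "colouring S x = (if x = Z then 33
     else if x \<in> covered Z A then 1 + subset_code S x else 17 + subset_code S x)"

lemma colouring_range: "colouring S x \<in> {1..42}"
  unfolding colouring_def using subset_code_less[of S x] by auto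

lemma covered_B: "covered Z B = P - {Z} - covered Z A"
  using covered_Diff[OF centre A_subset] .

lemma centre_not_covered: "Z \<notin> covered Z G"
  unfolding covered_def by simp

lemma vimage_centre: "l \<inter> colouring S -` {33} = l \<inter> {Z}"
proof -
  have "colouring S x = 33 \<longleftrightarrow> x = Z" for x
    using subset_code_less[of S x] unfolding colouring_def by auto
  then show ?thesis by blast
qed

lemma colouring_block_iff:
  assumes bG: "(b, G) \<in> colour_blocks" and x: "x \<in> P"
  shows "colouring S x \<in> {b..<b + 16} \<longleftrightarrow> x \<in> covered Z G"
proof -
  have code: "subset_code S x < 16" by (rule subset_code_less)
  from bG consider "b = 1" "G = A" | "b = 17" "G = B" unfolding colour_blocks_def by blast
  then show ?thesis
  proof cases
    case 1
    then show ?thesis using code centre_not_covered[of A] unfolding colouring_def by auto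
  next
    case 2
    then show ?thesis using code x covered_B unfolding colouring_def by auto
  qed
qed

lemma colouring_covered:
  assumes bG: "(b, G) \<in> colour_blocks" and x: "x \<in> covered Z G"
  shows "colouring S x = b + subset_code S x"
  using bG x covered_B centre_not_covered[of G] unfolding colouring_def colour_blocks_def by auto

lemma vimage_block:
  assumes "(b, G) \<in> colour_blocks" "l \<subseteq> P"
  shows "l \<inter> colouring S -` {b..<b + 16} = l \<inter> covered Z G"
  using colouring_block_iff[OF assms(1)] assms(2) by blast

lemma vimage_bit_colours:
  assumes bG: "(b, G) \<in> colour_blocks" and l: "l \<subseteq> P" and j: "j < 4"
  shows "l \<inter> colouring S -` bit_colours b j = l \<inter> covered Z G \<inter> S j"
proof (intro set_eqI iffI)
  fix x assume x: "x \<in> l \<inter> colouring S -` bit_colours b j"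
  then have "x \<in> covered Z G"
    using colouring_block_iff[OF bG] bit_colours_subset l by blast
  then show "x \<in> l \<inter> covered Z G \<inter> S j"
    using x colouring_covered[OF bG \<open>x \<in> covered Z G\<close>, of S]
      add_subset_code_in_bit_colours_iff[OF j, of b S x] by simp
next
  fix x assume "x \<in> l \<inter> covered Z G \<inter> S j"
  then show "x \<in> l \<inter> colouring S -` bit_colours b j"
    using colouring_covered[OF bG, of x S] add_subset_code_in_bit_colours_iff[OF j, of b S x] by simp
qed

abbreviation same_type :: "(nat \<Rightarrow> 'a set) \<Rightarrow> 'a set \<Rightarrow> 'a set \<Rightarrow> bool" where
  "same_type S l m \<equiv> line_type 42 (colouring S) l = line_type 42 (colouring S) m"

lemma same_type_card_eq:
  assumes "l \<in> L" "m \<in> L" "same_type S l m" "C \<subseteq> {1..42}"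
  shows "card (l \<inter> colouring S -` C) = card (m \<inter> colouring S -` C)"
  using line_type_eq_imp_card_eq[OF finite_line[OF assms(1)] finite_line[OF assms(2)] assms(3,4)] .

lemma same_type_centre_iff:
  assumes "l \<in> L" "m \<in> L" "same_type S l m"
  shows "Z \<in> l \<longleftrightarrow> Z \<in> m"
proof -
  have "card (l \<inter> {Z}) = card (m \<inter> {Z})"
    using same_type_card_eq[OF assms, of "{33}"] by (simp add: vimage_centre)
  then show ?thesis by (cases "Z \<in> l"; cases "Z \<in> m") auto
qed

lemma same_type_block_card:
  assumes "l \<in> L" "m \<in> L" "same_type S l m" and bG: "(b, G) \<in> colour_blocks"
  shows "card (l \<inter> covered Z G) = card (m \<inter> covered Z G)"
proof -
  have "{b..<b + 16} \<subseteq> {1..42}" using bG unfolding colour_blocks_def by auto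
  then show ?thesis
    using same_type_card_eq[OF assms(1-3)] vimage_block[OF bG] line_subset assms(1,2) by metis
qed

lemma same_type_bit_card:
  assumes "l \<in> L" "m \<in> L" "same_type S l m" and bG: "(b, G) \<in> colour_blocks" and "j < 4"
  shows "card (l \<inter> covered Z G \<inter> S j) = card (m \<inter> covered Z G \<inter> S j)"
proof -
  have "bit_colours b j \<subseteq> {1..42}" using bG bit_colours_subset[of b j] unfolding colour_blocks_def by auto
  then show ?thesis
    using same_type_card_eq[OF assms(1-3)] vimage_bit_colours[OF bG _ \<open>j < 4\<close>] line_subset assms(1,2) by metis
qed

definition balanced_through_centre :: "'a set \<Rightarrow> 'a set \<Rightarrow> 'a set set" where
  "balanced_through_centre l m = balanced_subsets (P - {Z}) (l - {Z}) (m - {Z}) {} {}"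

definition balanced_off_centre :: "'a set \<Rightarrow> 'a set \<Rightarrow> 'a set set" where
  "balanced_off_centre l m = (let p = meet l m in
     balanced_subsets (P - {Z}) ((l - {p}) \<inter> covered Z A) ((m - {p}) \<inter> covered Z A)
       ((l - {p}) \<inter> covered Z B) ((m - {p}) \<inter> covered Z B))"

lemma card_pencil_line_minus_centre: "l \<in> pencil Z \<Longrightarrow> card (l - {Z}) = n"
  using card_line unfolding pencil_def by (simp add: card_Diff_singleton)

lemma same_type_through_centre:
  assumes l: "l \<in> pencil Z" and m: "m \<in> pencil Z" and same: "same_type S l m"
    and S: "S j \<subseteq> P - {Z}" and j: "j < 4"
  shows "S j \<in> balanced_through_centre l m"
proof -
  have lm: "l \<in> L" "m \<in> L" using l m unfolding pencil_def by auto
  have "card (k \<inter> covered Z A) = (if k \<in> A then n else 0)" if "k \<in> pencil Z" for k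
    using pencil_Int_covered[OF that A_subset] card_pencil_line_minus_centre[OF that] by simp
  then have "l \<in> A \<longleftrightarrow> m \<in> A"
    using same_type_block_card[OF lm same, of 1 A] order_pos l m
    by (auto simp: colour_blocks_def split: if_splits)
  then obtain b G where bG: "(b, G) \<in> colour_blocks" "l \<in> G" "m \<in> G"
    using l m unfolding colour_blocks_def by (cases "l \<in> A") blast+
  then have "G \<subseteq> pencil Z" using A_subset unfolding colour_blocks_def by blast
  then have "l \<inter> covered Z G = l - {Z}" "m \<inter> covered Z G = m - {Z}"
    using pencil_Int_covered l m bG(2,3) by simp_all
  then have "card (S j \<inter> (l - {Z})) = card (S j \<inter> (m - {Z}))"
    using same_type_bit_card[OF lm same bG(1) j] by (simp add: Int_commute)
  then show ?thesis
    using S unfolding balanced_through_centre_def balanced_subsets_def by simp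
qed

lemma same_type_off_centre:
  assumes l: "l \<in> L" and m: "m \<in> L" and "l \<noteq> m" and same: "same_type S l m"
    and S: "S j \<subseteq> P - {Z}" and j: "j < 4"
  shows "S j \<in> balanced_off_centre l m"
proof -
  define p where "p = meet l m"
  have p: "p \<in> l" "p \<in> m" using meet_in[OF l m \<open>l \<noteq> m\<close>] unfolding p_def by auto
  have "card (S j \<inter> ((l - {p}) \<inter> covered Z G)) = card (S j \<inter> ((m - {p}) \<inter> covered Z G))"
    if bG: "(b, G) \<in> colour_blocks" for b G
  proof -
    have "S j \<inter> ((k - {p}) \<inter> covered Z G) = (k \<inter> covered Z G \<inter> S j) - {p}" for k by blast
    then show ?thesis
      using same_type_bit_card[OF l m same bG j] p finite_line[OF l] finite_line[OF m]
      by (simp add: card_Diff_singleton_if)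
  qed
  moreover have "(1, A) \<in> colour_blocks" "(17, B) \<in> colour_blocks"
    unfolding colour_blocks_def by simp_all
  ultimately show ?thesis
    using S unfolding balanced_off_centre_def balanced_subsets_def p_def[symmetric] Let_def by simp
qed

lemma same_type_cases:
  assumes "l \<in> L" "m \<in> L" "l \<noteq> m" "same_type S l m" "\<forall>j<4. S j \<subseteq> P - {Z}"
  shows "(l \<in> pencil Z \<and> m \<in> pencil Z \<and> (\<forall>j<4. S j \<in> balanced_through_centre l m))
    \<or> (Z \<notin> l \<and> Z \<notin> m \<and> (\<forall>j<4. S j \<in> balanced_off_centre l m))"
proof (cases "Z \<in> l")
  case True
  then have "l \<in> pencil Z" "m \<in> pencil Z"
    using same_type_centre_iff[OF assms(1,2,4)] assms(1,2) unfolding pencil_def by auto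
  then show ?thesis using same_type_through_centre assms(4,5) by blast
next
  case False
  then have "Z \<notin> m" using same_type_centre_iff[OF assms(1,2,4)] by simp
  then show ?thesis using False same_type_off_centre assms by blast
qed

lemma card_balanced_through_centre:
  assumes l: "l \<in> pencil Z" and m: "m \<in> pencil Z" and "l \<noteq> m"
  shows "card (balanced_through_centre l m)^4 * (3 * (n + 1)^2) \<le> (2 ^ card (P - {Z}))^4"
proof -
  have "l - {Z} \<union> (m - {Z}) \<union> {} \<union> {} \<subseteq> P - {Z}"
    using l m line_subset unfolding pencil_def by auto
  moreover have "(l - {Z}) \<inter> (m - {Z}) = {}"
    using pencil_unique[OF l m] \<open>l \<noteq> m\<close> by blast
  ultimately have "card (balanced_through_centre l m)^4 * ((3*n + 1) * (3*0 + 1))^2 \<le> (2 ^ card (P - {Z}))^4"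
    unfolding balanced_through_centre_def using finite_points
    by (intro card_balanced_subsets_pow4_le) (simp_all add: card_pencil_line_minus_centre l m)
  moreover have "3 * (n + 1)^2 \<le> ((3*n + 1) * (3*0 + 1))^2"
    using order_pos by (simp add: power2_eq_square algebra_simps)
  ultimately show ?thesis
    by (meson le_trans mult_le_mono2)
qed

lemma card_punctured_line_Int_covered:
  assumes "k \<in> L" "Z \<notin> k" "p \<in> k" "G \<subseteq> pencil Z"
  shows "card ((k - {p}) \<inter> covered Z G) = card G - (if p \<in> covered Z G then 1 else 0)"
proof -
  have "(k - {p}) \<inter> covered Z G = k \<inter> covered Z G - {p}" by blast
  then show ?thesis
    using assms card_line_Int_covered[OF assms(1,2,4)] finite_line[OF assms(1)]
    by (simp add: card_Diff_singleton_if)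
qed

lemma card_balanced_off_centre:
  assumes l: "l \<in> L" "Z \<notin> l" and m: "m \<in> L" "Z \<notin> m" and "l \<noteq> m"
  shows "card (balanced_off_centre l m)^4 * (2 * n^4) \<le> (2 ^ card (P - {Z}))^4"
proof -
  define p where "p = meet l m"
  have p: "p \<in> l" "p \<in> m" using meet_in[OF l(1) m(1) \<open>l \<noteq> m\<close>] unfolding p_def by auto
  have "p \<in> P" "p \<noteq> Z" using p l line_subset by auto
  then have pAB: "p \<in> covered Z A \<longleftrightarrow> p \<notin> covered Z B" using covered_B by blast
  define k where "k = card A - (if p \<in> covered Z A then 1 else 0)"
  define k' where "k' = card B - (if p \<in> covered Z B then 1 else 0)"
  have card_B: "card B = n + 1 - (n + 1) div 2"
    using card_pencil card_A A_subset finite_pencil by (simp add: card_Diff_subset finite_subset)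
  have "2 * ((n + 1) div 2) \<le> n + 1" "n \<le> 2 * ((n + 1) div 2)" by linarith+
  then have "k \<le> k' + 2" "k' \<le> k + 2" "k + k' = n"
    using pAB order_pos unfolding k_def k'_def card_A card_B by auto
  then have "2 * n^4 \<le> ((3*k + 1) * (3*k' + 1))^2"
    using close_split_pow4_le by blast
  moreover have "card (balanced_off_centre l m)^4 * ((3*k + 1) * (3*k' + 1))^2 \<le> (2 ^ card (P - {Z}))^4"
  proof -
    have "(l - {p}) \<inter> (m - {p}) = {}" using join_unique[OF l(1) m(1)] p \<open>l \<noteq> m\<close> by blast
    moreover have "covered Z A \<inter> covered Z B = {}" "covered Z A \<union> covered Z B \<subseteq> P - {Z}"
      using covered_B unfolding covered_def by blast+
    moreover have "card ((g - {p}) \<inter> covered Z A) = k" "card ((g - {p}) \<inter> covered Z B) = k'"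
      if "g \<in> L" "Z \<notin> g" "p \<in> g" for g
      using card_punctured_line_Int_covered[OF that] A_subset unfolding k_def k'_def by auto
    ultimately show ?thesis
      unfolding balanced_off_centre_def p_def[symmetric] Let_def using finite_points l m p
      by (intro card_balanced_subsets_pow4_le) blast+
  qed
  ultimately show ?thesis
    by (meson le_trans mult_le_mono2)
qed

definition subset_tuples :: "(nat \<Rightarrow> 'a set) set" where
  "subset_tuples = (\<Pi>\<^sub>E j\<in>{..<4::nat}. Pow (P - {Z}))"

definition bad_through_centre :: "(nat \<Rightarrow> 'a set) set" where
  "bad_through_centre = (\<Union>(l, m)\<in>{(l, m). l \<in> pencil Z \<and> m \<in> pencil Z \<and> l \<noteq> m}.
     \<Pi>\<^sub>E j\<in>{..<4::nat}. balanced_through_centre l m)"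

definition bad_off_centre :: "(nat \<Rightarrow> 'a set) set" where
  "bad_off_centre = (\<Union>(l, m)\<in>{(l, m). l \<in> L \<and> m \<in> L \<and> Z \<notin> l \<and> Z \<notin> m \<and> l \<noteq> m}.
     \<Pi>\<^sub>E j\<in>{..<4::nat}. balanced_off_centre l m)"

lemma card_subset_tuples: "card subset_tuples = (2 ^ card (P - {Z}))^4"
  unfolding subset_tuples_def using finite_points by (simp add: card_PiE card_Pow)

lemma card_bad_through_centre_le: "3 * card bad_through_centre \<le> card subset_tuples"
proof -
  define I where "I = {(l, m). l \<in> pencil Z \<and> m \<in> pencil Z \<and> l \<noteq> m}"
  have "I \<subseteq> pencil Z \<times> pencil Z" unfolding I_def by auto
  then have "finite I" "card I \<le> (n + 1)^2"
    using finite_pencil card_mono[of "pencil Z \<times> pencil Z" I] card_pencil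
    by (auto intro: finite_subset simp: card_cartesian_product power2_eq_square)
  have "card bad_through_centre * (3 * (n + 1)^2) \<le> (n + 1)^2 * card subset_tuples"
    unfolding bad_through_centre_def I_def[symmetric]
  proof (rule card_UN_mult_le[OF \<open>finite I\<close> _ \<open>card I \<le> (n + 1)^2\<close>])
    fix i assume "i \<in> I"
    then obtain l m where "i = (l, m)" "l \<in> pencil Z" "m \<in> pencil Z" "l \<noteq> m"
      unfolding I_def by blast
    then show "card (case i of (l, m) \<Rightarrow> \<Pi>\<^sub>E j\<in>{..<4::nat}. balanced_through_centre l m)
        * (3 * (n + 1)^2) \<le> card subset_tuples"
      using card_balanced_through_centre[of l m] by (simp add: card_PiE card_subset_tuples)
  qed
  then show ?thesis by (simp add: algebra_simps)
qed

lemma card_bad_off_centre_le: "2 * card bad_off_centre \<le> card subset_tuples"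
proof -
  define I where "I = {(l, m). l \<in> L \<and> m \<in> L \<and> Z \<notin> l \<and> Z \<notin> m \<and> l \<noteq> m}"
  have I: "I \<subseteq> {l \<in> L. Z \<notin> l} \<times> {l \<in> L. Z \<notin> l}" unfolding I_def by auto
  then have "finite I" using finite_lines by (auto intro: finite_subset)
  have "card I \<le> card ({l \<in> L. Z \<notin> l} \<times> {l \<in> L. Z \<notin> l})"
    using I finite_lines by (intro card_mono) auto
  also have "\<dots> \<le> n^2 * n^2"
    using card_lines_avoiding_le[of n Z] card_line card_pencil order_pos
    unfolding card_cartesian_product by (intro mult_le_mono) simp_all
  finally have "card I \<le> n^4" by (simp add: power_numeral_reduce)
  have "card bad_off_centre * (2 * n^4) \<le> n^4 * card subset_tuples"
    unfolding bad_off_centre_def I_def[symmetric]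
  proof (rule card_UN_mult_le[OF \<open>finite I\<close> _ \<open>card I \<le> n^4\<close>])
    fix i assume "i \<in> I"
    then obtain l m where "i = (l, m)" "l \<in> L" "Z \<notin> l" "m \<in> L" "Z \<notin> m" "l \<noteq> m"
      unfolding I_def by blast
    then show "card (case i of (l, m) \<Rightarrow> \<Pi>\<^sub>E j\<in>{..<4::nat}. balanced_off_centre l m)
        * (2 * n^4) \<le> card subset_tuples"
      using card_balanced_off_centre[of l m] by (simp add: card_PiE card_subset_tuples)
  qed
  then show ?thesis using order_pos by (simp add: algebra_simps)
qed

lemma bad_subset_tuples: "bad_through_centre \<union> bad_off_centre \<subseteq> subset_tuples"
  unfolding bad_through_centre_def bad_off_centre_def subset_tuples_def
    balanced_through_centre_def balanced_off_centre_def balanced_subsets_def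
  by (auto simp: PiE_iff Let_def)

lemma separating_if_not_bad:
  assumes S: "S \<in> subset_tuples" "S \<notin> bad_through_centre \<union> bad_off_centre"
  shows "inj_on (line_type 42 (colouring S)) L"
proof (rule inj_onI, rule ccontr)
  fix l m assume lm: "l \<in> L" "m \<in> L" "same_type S l m" "l \<noteq> m"
  have S_sub: "\<forall>j<4. S j \<subseteq> P - {Z}" and ext: "S \<in> extensional {..<4}"
    using S(1) unfolding subset_tuples_def by (auto simp: PiE_iff)
  from same_type_cases[OF lm(1,2,4,3) S_sub]
  have "S \<in> bad_through_centre \<union> bad_off_centre"
  proof (elim disjE conjE)
    assume "l \<in> pencil Z" "m \<in> pencil Z" "\<forall>j<4. S j \<in> balanced_through_centre l m"
    then show ?thesis
      using ext lm(4) unfolding bad_through_centre_def by (auto simp: PiE_iff)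
  next
    assume "Z \<notin> l" "Z \<notin> m" "\<forall>j<4. S j \<in> balanced_off_centre l m"
    then show ?thesis
      using ext lm unfolding bad_off_centre_def by (auto simp: PiE_iff)
  qed
  then show False using S(2) by blast
qed

lemma exists_separating_subsets: "\<exists>S \<in> subset_tuples. inj_on (line_type 42 (colouring S)) L"
proof -
  have "card (bad_through_centre \<union> bad_off_centre) \<le> card bad_through_centre + card bad_off_centre"
    by (rule card_Un_le)
  also have "\<dots> < card subset_tuples"
  proof -
    have "0 < card subset_tuples" by (simp add: card_subset_tuples)
    then show ?thesis using card_bad_through_centre_le card_bad_off_centre_le by linarith
  qed
  finally have "bad_through_centre \<union> bad_off_centre \<noteq> subset_tuples"
    by auto
  then have "\<not> subset_tuples \<subseteq> bad_through_centre \<union> bad_off_centre"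
    using bad_subset_tuples by blast
  then show ?thesis using separating_if_not_bad by blast
qed

end

theorem mainTheorem8:
  fixes P :: "'a set" and L :: "'a set set"
  assumes "finite P" and "projective_plane P L" and "pp_order L \<ge> 2"
  shows "\<exists>f. legitimate_coloring P L 42 f"
proof -
  interpret finite_projective_plane P L
    using assms(1,2) by unfold_locales
  define n where "n = pp_order L"
  obtain Z l where Zl: "Z \<in> P" "l \<in> L" "Z \<notin> l"
    by (rule ex_point_off_line)
  have card_line: "card k = n + 1" if "k \<in> L" for k
    using card_line_pp_order[OF _ that] assms(3) unfolding n_def by simp
  have "card (pencil Z) = n + 1"
    using card_line_eq_card_pencil[OF Zl] card_line[OF Zl(2)] by simp
  moreover obtain A where "A \<subseteq> pencil Z" "card A = (n + 1) div 2"
    using calculation by (metis obtain_subset_with_card_n div_le_dividend)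
  ultimately interpret pencil_colouring P L Z A n
    using Zl(1) card_line assms(3) by unfold_locales (auto simp: n_def)
  obtain S where "inj_on (line_type 42 (colouring S)) L"
    using exists_separating_subsets by blast
  then have "legitimate_coloring P L 42 (colouring S)"
    unfolding legitimate_coloring_def using colouring_range by blast
  then show ?thesis by blast
qed

end
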